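(* Suppose Assumptions 1, 2, 3 and 5 hold (but not necessarily Assumption 4), with all expectations finite. For $(g,t)\in\{0,1\}^2$ let $p_{1|gt}=P(D_{gt}=1)$ and $\Delta_{gt}=E\big(Y(1)-Y(0)\mid G=g,T=t,D(0)=1\big)$ (a term multiplied by $p_{1|10}=0$ is taken to be $0$). Then $$W_{DID}=\Delta+\frac{1}{DID_D}\Big((\Delta_{11}-\Delta_{10})\,p_{1|10}-(\Delta_{01}-\Delta_{00})\,p_{1|00}\Big).$$
   Context: Standing framework. Let $(Y(0),Y(1),V,G,T)$ be random variables on a common probability space, with $G\in\{0,1\}$ (group; $G=1$ is the "treatment group"), $T\in\{0,1\}$ (period), $V$ real-valued, and let $(v_{gt})_{(g,t)\in\{0,1\}^2}$ be real constants. The treatment is $D=1\{V\geq v_{GT}\}$ and the potential treatments are $D(t)=1\{V\geq v_{Gt}\}$, $t\in\{0,1\}$, so that $D=D(T)$. The observed outcome is $Y=DY(1)+(1-D)Y(0)$. For any random variable $R$, $R_{gt}$ denotes a random variable distributed as $R$ conditional on $\{G=g,T=t\}$ and $R_{dgt}$ one distributed as $R$ conditional on $\{D=d,G=g,T=t\}$. Let $S=\{D(0)<D(1),\,G=1\}$ and $\Delta=E(Y(1)-Y(0)\mid S,T=1)$. Assumption 1: $D=1\{V\geq v_{GT}\}$ with $V$ independent of $T$ conditional on $G$. Assumption 2: $E(D_{11})>E(D_{10})$ and $E(D_{11})-E(D_{10})>E(D_{01})-E(D_{00})$. Assumption 3: $E(Y(0)\mid G,T=1)-E(Y(0)\mid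 G,T=0)$ does not depend on $G$. Assumption 5: $0<E(D_{01})=E(D_{00})<1$. For any random variable $R$, $DID_R=E(R_{11})-E(R_{10})-\big(E(R_{01})-E(R_{00})\big)$, and $W_{DID}=DID_Y/DID_D$. *)

theory Defs
  imports "HOL-Probability.Probability"
begin

text \<open>Elementary conditional expectation given an event:
  E(R | A) = E(R 1_A) / P(A). (Division by zero yields 0 in Isabelle.)\<close>
definition cexp :: "'a measure \<Rightarrow> ('a \<Rightarrow> real) \<Rightarrow> 'a set \<Rightarrow> real" where
  "cexp M R A = (\<integral>x. indicator A x * R x \<partial>M) / measure M A"

definition cell :: "'a measure \<Rightarrow> ('a \<Rightarrow> nat) \<Rightarrow> ('a \<Rightarrow> nat) \<Rightarrow> nat \<Rightarrow> nat \<Rightarrow> 'a set" where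
  "cell M G T g t = {\<omega> \<in> space M. G \<omega> = g \<and> T \<omega> = t}"

definition Dtreat :: "(nat \<Rightarrow> nat \<Rightarrow> real) \<Rightarrow> ('a \<Rightarrow> real) \<Rightarrow> ('a \<Rightarrow> nat) \<Rightarrow> ('a \<Rightarrow> nat) \<Rightarrow> 'a \<Rightarrow> real" where
  "Dtreat v V G T \<omega> = (if V \<omega> \<ge> v (G \<omega>) (T \<omega>) then 1 else 0)"

definition Dpot :: "(nat \<Rightarrow> nat \<Rightarrow> real) \<Rightarrow> ('a \<Rightarrow> real) \<Rightarrow> ('a \<Rightarrow> nat) \<Rightarrow> nat \<Rightarrow> 'a \<Rightarrow> real" where
  "Dpot v V G t \<omega> = (if V \<omega> \<ge> v (G \<omega>) t then 1 else 0)"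

definition Yobs :: "(nat \<Rightarrow> nat \<Rightarrow> real) \<Rightarrow> ('a \<Rightarrow> real) \<Rightarrow> ('a \<Rightarrow> nat) \<Rightarrow> ('a \<Rightarrow> nat)
    \<Rightarrow> ('a \<Rightarrow> real) \<Rightarrow> ('a \<Rightarrow> real) \<Rightarrow> 'a \<Rightarrow> real" where
  "Yobs v V G T Y0 Y1 \<omega> = Dtreat v V G T \<omega> * Y1 \<omega> + (1 - Dtreat v V G T \<omega>) * Y0 \<omega>"

definition DID :: "'a measure \<Rightarrow> ('a \<Rightarrow> nat) \<Rightarrow> ('a \<Rightarrow> nat) \<Rightarrow> ('a \<Rightarrow> real) \<Rightarrow> real" where
  "DID M G T R = cexp M R (cell M G T 1 1) - cexp M R (cell M G T 1 0)
     - (cexp M R (cell M G T 0 1) - cexp M R (cell M G T 0 0))"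

text \<open>Assumption 1 (independence part): V independent of T conditional on G
  (G, T discrete with values in {0,1}).\<close>
definition cond_indep_V_T :: "'a measure \<Rightarrow> ('a \<Rightarrow> real) \<Rightarrow> ('a \<Rightarrow> nat) \<Rightarrow> ('a \<Rightarrow> nat) \<Rightarrow> bool" where
  "cond_indep_V_T M V G T \<longleftrightarrow>
    (\<forall>g\<in>{0,1}. \<forall>t\<in>{0,1}. \<forall>B\<in>sets borel.
       measure M ({\<omega> \<in> space M. V \<omega> \<in> B} \<inter> cell M G T g t) * measure M {\<omega> \<in> space M. G \<omega> = g}
     = measure M {\<omega> \<in> space M. V \<omega> \<in> B \<and> G \<omega> = g} * measure M (cell M G T g t))"

end

theory Submission
  imports Defs
begin

text \<open>Conditional independence of V and T given G makes the share of the group g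
  above any threshold the same in both periods. The treated of cell (g,t) are those
  with V above v g t, so E(Y | cell) = E(Y(0) | cell) plus the treated share times
  their mean effect. In group 1 the threshold falls (Assumption 2), so the treated of
  period 1 are those already treated in period 0 plus the switchers S; in group 0
  equal take-up (Assumption 5) means both thresholds select the same population up to
  a null set. In the double difference, Assumption 3 removes the Y(0) terms.\<close>

lemma cexp_eq_set_integral: "cexp M X A = (LINT x:A|M. X x) / measure M A"
  unfolding cexp_def set_lebesgue_integral_def by simp

lemma set_integral_null_set:
  fixes X :: "'a \<Rightarrow> real"
  assumes "A \<in> null_sets M"
  shows "(LINT x:A|M. X x) = 0"
  unfolding set_lebesgue_integral_def
  by (rule integral_eq_zero_AE) (use AE_not_in[OF assms] in \<open>eventually_elim, simp\<close>)

lemma (in finite_measure) measure_times_cexp: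
  assumes "A \<in> sets M"
  shows "measure M A * cexp M X A = (LINT x:A|M. X x)"
proof (cases "measure M A = 0")
  case True
  then have "A \<in> null_sets M"
    using assms by (simp add: null_sets_def emeasure_eq_measure)
  with True show ?thesis by (simp add: set_integral_null_set)
qed (simp add: cexp_eq_set_integral)

lemma (in finite_measure) set_integral_eq_of_subset_measure_eq:
  fixes X :: "'a \<Rightarrow> real"
  assumes X: "integrable M X" and AB: "A \<subseteq> B" "A \<in> sets M" "B \<in> sets M"
    and eq: "measure M A = measure M B"
  shows "(LINT x:A|M. X x) = (LINT x:B|M. X x)"
proof (rule set_integral_cong_set)
  have "measure M (B - A) = 0"
    using finite_measure_Diff[OF AB(3,2)] AB(1) eq by (simp add: Int_absorb2)
  then have "B - A \<in> null_sets M"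
    using AB by (simp add: null_sets_def emeasure_eq_measure)
  from AE_not_in[OF this] show "AE x in M. x \<in> B \<longleftrightarrow> x \<in> A"
    by (rule eventually_mono) (use AB(1) in blast)
qed (use X AB in \<open>auto simp: set_borel_measurable_def\<close>)

locale threshold_did = prob_space M
  for M :: "'a measure" and V :: "'a \<Rightarrow> real" and G T :: "'a \<Rightarrow> nat"
    and v :: "nat \<Rightarrow> nat \<Rightarrow> real" +
  assumes V_meas [measurable]: "V \<in> borel_measurable M"
    and G_meas [measurable]: "G \<in> measurable M (count_space UNIV)"
    and T_meas [measurable]: "T \<in> measurable M (count_space UNIV)"
    and cells_pos: "\<And>g t. g \<in> {0,1} \<Longrightarrow> t \<in> {0,1} \<Longrightarrow> measure M (cell M G T g t) > 0"
    and cond_indep: "cond_indep_V_T M V G T"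
begin

definition above :: "real \<Rightarrow> 'a set" where
  "above x = {\<omega> \<in> space M. x \<le> V \<omega>}"

text \<open>By conditional independence, group_tail g (v g t) is the take-up rate
  E(D(t) | G = g, T = t') of either period t'.\<close>
definition group_tail :: "nat \<Rightarrow> real \<Rightarrow> real" where
  "group_tail g x = measure M {\<omega> \<in> space M. x \<le> V \<omega> \<and> G \<omega> = g} / measure M {\<omega> \<in> space M. G \<omega> = g}"

lemma cell_sets [measurable]: "cell M G T g t \<in> sets M"
  unfolding cell_def by measurable

lemma above_sets [measurable]: "above x \<in> sets M"
  unfolding above_def by measurable

lemma measure_cell_inter_above:
  assumes "g \<in> {0,1}" "t \<in> {0,1}"
  shows "measure M (cell M G T g t \<inter> above x) = group_tail g x * measure M (cell M G T g t)"
proof -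
  have "measure M (cell M G T g t) \<le> measure M {\<omega> \<in> space M. G \<omega> = g}"
    unfolding cell_def by (rule finite_measure_mono) auto
  with cells_pos[OF assms] have "measure M {\<omega> \<in> space M. G \<omega> = g} > 0"
    by linarith
  moreover have "measure M ({\<omega> \<in> space M. V \<omega> \<in> {x..}} \<inter> cell M G T g t)
        * measure M {\<omega> \<in> space M. G \<omega> = g}
      = measure M {\<omega> \<in> space M. V \<omega> \<in> {x..} \<and> G \<omega> = g} * measure M (cell M G T g t)"
    using cond_indep assms atLeast_borel unfolding cond_indep_V_T_def by blast
  ultimately show ?thesis
    unfolding group_tail_def above_def by (simp add: field_simps Int_commute)
qed

lemma cexp_Dtreat_cell:
  assumes "g \<in> {0,1}" "t \<in> {0,1}"
  shows "cexp M (Dtreat v V G T) (cell M G T g t) = group_tail g (v g t)"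
proof -
  have "(\<integral>\<omega>. indicator (cell M G T g t) \<omega> * Dtreat v V G T \<omega> \<partial>M)
      = (\<integral>\<omega>. indicator (cell M G T g t \<inter> above (v g t)) \<omega> \<partial>M)"
    by (rule Bochner_Integration.integral_cong)
      (auto simp: indicator_def cell_def above_def Dtreat_def)
  then show ?thesis
    using measure_cell_inter_above[OF assms] cells_pos[OF assms]
    by (simp add: cexp_def)
qed

lemma group_tail_antimono: "x \<le> y \<Longrightarrow> group_tail g y \<le> group_tail g x"
  unfolding group_tail_def
  by (intro divide_right_mono finite_measure_mono) auto

lemma cell_inter_Dpot_eq:
  "cell M G T g t \<inter> {\<omega> \<in> space M. Dpot v V G s \<omega> = 1} = cell M G T g t \<inter> above (v g s)"
  by (auto simp: cell_def above_def Dpot_def split: if_splits)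

lemma switcher_set_eq:
  "{\<omega> \<in> space M. Dpot v V G 0 \<omega> < Dpot v V G 1 \<omega> \<and> G \<omega> = g} \<inter> {\<omega> \<in> space M. T \<omega> = t}
     = cell M G T g t \<inter> above (v g 1) - above (v g 0)"
  by (auto simp: cell_def above_def Dpot_def split: if_splits)

lemma set_integral_cell_inter_above:
  assumes "g \<in> {0,1}" "t \<in> {0,1}"
  shows "(LINT \<omega>:cell M G T g t \<inter> above x|M. X \<omega>)
    = group_tail g x * measure M (cell M G T g t) * cexp M X (cell M G T g t \<inter> above x)"
  using measure_times_cexp[of "cell M G T g t \<inter> above x" X] measure_cell_inter_above[OF assms]
  by simp

lemma set_integral_cell_inter_above_eq_tail:
  fixes X :: "'a \<Rightarrow> real"
  assumes X: "integrable M X" and gt: "g \<in> {0,1}" "t \<in> {0,1}"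
    and tail: "group_tail g x = group_tail g y"
  shows "(LINT \<omega>:cell M G T g t \<inter> above x|M. X \<omega>) = (LINT \<omega>:cell M G T g t \<inter> above y|M. X \<omega>)"
proof -
  have "measure M (cell M G T g t \<inter> above x) = measure M (cell M G T g t \<inter> above y)" (is ?meas)
    using tail by (simp add: measure_cell_inter_above[OF gt])
  then show ?thesis
  proof (cases "x \<le> y")
    case True
    then have "cell M G T g t \<inter> above y \<subseteq> cell M G T g t \<inter> above x"
      unfolding above_def by auto
    with \<open>?meas\<close> show ?thesis
      by (intro set_integral_eq_of_subset_measure_eq[OF X, symmetric]) auto
  next
    case False
    then have "cell M G T g t \<inter> above x \<subseteq> cell M G T g t \<inter> above y"
      unfolding above_def by auto
    with \<open>?meas\<close> show ?thesis
      by (intro set_integral_eq_of_subset_measure_eq[OF X]) auto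
  qed
qed

lemma set_integral_Yobs_cell:
  assumes Y0: "integrable M Y0" and Y1: "integrable M Y1"
  shows "(LINT \<omega>:cell M G T g t|M. Yobs v V G T Y0 Y1 \<omega>)
    = (LINT \<omega>:cell M G T g t|M. Y0 \<omega>) + (LINT \<omega>:cell M G T g t \<inter> above (v g t)|M. Y1 \<omega> - Y0 \<omega>)"
proof -
  have "(LINT \<omega>:cell M G T g t|M. Yobs v V G T Y0 Y1 \<omega>)
      = (\<integral>\<omega>. indicator (cell M G T g t) \<omega> *\<^sub>R Y0 \<omega>
             + indicator (cell M G T g t \<inter> above (v g t)) \<omega> *\<^sub>R (Y1 \<omega> - Y0 \<omega>) \<partial>M)"
    unfolding set_lebesgue_integral_def
    by (rule Bochner_Integration.integral_cong)
      (auto simp: indicator_def cell_def above_def Dtreat_def Yobs_def algebra_simps)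
  also have "\<dots> = (LINT \<omega>:cell M G T g t|M. Y0 \<omega>) + (LINT \<omega>:cell M G T g t \<inter> above (v g t)|M. Y1 \<omega> - Y0 \<omega>)"
    unfolding set_lebesgue_integral_def
    using Y0 Y1 by (intro Bochner_Integration.integral_add integrable_mult_indicator) auto
  finally show ?thesis .
qed

lemma cexp_Yobs_cell:
  assumes "integrable M Y0" "integrable M Y1"
  shows "cexp M (Yobs v V G T Y0 Y1) (cell M G T g t) = cexp M Y0 (cell M G T g t)
    + (LINT \<omega>:cell M G T g t \<inter> above (v g t)|M. Y1 \<omega> - Y0 \<omega>) / measure M (cell M G T g t)"
  unfolding cexp_eq_set_integral set_integral_Yobs_cell[OF assms] by (simp add: add_divide_distrib)

lemma cexp_Yobs_cell_stable_tail:
  assumes Y0: "integrable M Y0" and Y1: "integrable M Y1" and gt: "g \<in> {0,1}" "t \<in> {0,1}"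
    and tail: "group_tail g (v g t) = group_tail g (v g 0)"
  shows "cexp M (Yobs v V G T Y0 Y1) (cell M G T g t) = cexp M Y0 (cell M G T g t)
    + group_tail g (v g 0) * cexp M (\<lambda>\<omega>. Y1 \<omega> - Y0 \<omega>) (cell M G T g t \<inter> above (v g 0))"
proof -
  have "(LINT \<omega>:cell M G T g t \<inter> above (v g t)|M. Y1 \<omega> - Y0 \<omega>)
      = group_tail g (v g 0) * measure M (cell M G T g t)
        * cexp M (\<lambda>\<omega>. Y1 \<omega> - Y0 \<omega>) (cell M G T g t \<inter> above (v g 0))"
    using set_integral_cell_inter_above_eq_tail[OF _ gt tail] set_integral_cell_inter_above[OF gt]
      Y0 Y1 by simp
  then show ?thesis
    using cexp_Yobs_cell[OF Y0 Y1, of g t] cells_pos[OF gt] by simp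
qed

lemma cexp_Yobs_cell_switchers:
  assumes Y0: "integrable M Y0" and Y1: "integrable M Y1" and gt: "g \<in> {0,1}" "t \<in> {0,1}"
    and thresh: "v g t \<le> v g 0"
  defines "C \<equiv> cell M G T g t \<inter> above (v g t) - above (v g 0)"
  shows "cexp M (Yobs v V G T Y0 Y1) (cell M G T g t) = cexp M Y0 (cell M G T g t)
    + group_tail g (v g 0) * cexp M (\<lambda>\<omega>. Y1 \<omega> - Y0 \<omega>) (cell M G T g t \<inter> above (v g 0))
    + (group_tail g (v g t) - group_tail g (v g 0)) * cexp M (\<lambda>\<omega>. Y1 \<omega> - Y0 \<omega>) C"
proof -
  let ?A = "cell M G T g t \<inter> above (v g 0)"
  have split: "cell M G T g t \<inter> above (v g t) = ?A \<union> C" and disj: "?A \<inter> C = {}"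
    using thresh unfolding C_def above_def by auto
  have C_sets: "C \<in> sets M"
    unfolding C_def by measurable
  have "measure M C = measure M (?A \<union> C) - measure M ?A"
    using finite_measure_Union[OF _ C_sets disj] by simp
  also have "\<dots> = (group_tail g (v g t) - group_tail g (v g 0)) * measure M (cell M G T g t)"
    unfolding split[symmetric] measure_cell_inter_above[OF gt] by (simp add: algebra_simps)
  finally have "(LINT \<omega>:C|M. Y1 \<omega> - Y0 \<omega>) = (group_tail g (v g t) - group_tail g (v g 0))
      * measure M (cell M G T g t) * cexp M (\<lambda>\<omega>. Y1 \<omega> - Y0 \<omega>) C"
    using measure_times_cexp[OF C_sets] by simp
  moreover have "(LINT \<omega>:cell M G T g t \<inter> above (v g t)|M. Y1 \<omega> - Y0 \<omega>)
      = (LINT \<omega>:?A|M. Y1 \<omega> - Y0 \<omega>) + (LINT \<omega>:C|M. Y1 \<omega> - Y0 \<omega>)"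
  proof -
    have "set_integrable M B (\<lambda>\<omega>. Y1 \<omega> - Y0 \<omega>)" if "B \<in> sets M" for B
      unfolding set_integrable_def using that Y0 Y1 by (intro integrable_mult_indicator) auto
    then show ?thesis
      unfolding split using C_sets by (intro set_integral_Un disj) auto
  qed
  ultimately have "(LINT \<omega>:cell M G T g t \<inter> above (v g t)|M. Y1 \<omega> - Y0 \<omega>)
      = measure M (cell M G T g t) * (group_tail g (v g 0) * cexp M (\<lambda>\<omega>. Y1 \<omega> - Y0 \<omega>) ?A
        + (group_tail g (v g t) - group_tail g (v g 0)) * cexp M (\<lambda>\<omega>. Y1 \<omega> - Y0 \<omega>) C)"
    using set_integral_cell_inter_above[OF gt, of "v g 0"] by (simp add: algebra_simps)
  then show ?thesis
    using cexp_Yobs_cell[OF Y0 Y1, of g t] cells_pos[OF gt] by simp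
qed

end

theorem mainTheorem2:
  fixes M :: "'a measure" and Y0 Y1 V :: "'a \<Rightarrow> real" and G T :: "'a \<Rightarrow> nat"
    and v :: "nat \<Rightarrow> nat \<Rightarrow> real"
  assumes M: "prob_space M"
    and Y0_int: "integrable M Y0" and Y1_int: "integrable M Y1"
    and V_meas: "V \<in> borel_measurable M"
    and G_meas: "G \<in> measurable M (count_space UNIV)"
    and T_meas: "T \<in> measurable M (count_space UNIV)"
    and G_vals: "\<forall>\<omega>\<in>space M. G \<omega> \<in> {0,1}"
    and T_vals: "\<forall>\<omega>\<in>space M. T \<omega> \<in> {0,1}"
    and cells_pos: "\<forall>g\<in>{0,1}. \<forall>t\<in>{0,1}. measure M (cell M G T g t) > 0"
    \<comment> \<open>Assumption 1\<close>
    and A1: "cond_indep_V_T M V G T"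
    \<comment> \<open>Assumption 2\<close>
    and A2a: "cexp M (Dtreat v V G T) (cell M G T 1 1) > cexp M (Dtreat v V G T) (cell M G T 1 0)"
    and A2b: "cexp M (Dtreat v V G T) (cell M G T 1 1) - cexp M (Dtreat v V G T) (cell M G T 1 0)
              > cexp M (Dtreat v V G T) (cell M G T 0 1) - cexp M (Dtreat v V G T) (cell M G T 0 0)"
    \<comment> \<open>Assumption 3\<close>
    and A3: "cexp M Y0 (cell M G T 1 1) - cexp M Y0 (cell M G T 1 0)
             = cexp M Y0 (cell M G T 0 1) - cexp M Y0 (cell M G T 0 0)"
    \<comment> \<open>Assumption 5\<close>
    and A5a: "0 < cexp M (Dtreat v V G T) (cell M G T 0 1)"
    and A5b: "cexp M (Dtreat v V G T) (cell M G T 0 1) = cexp M (Dtreat v V G T) (cell M G T 0 0)"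
    and A5c: "cexp M (Dtreat v V G T) (cell M G T 0 1) < 1"
  shows
    "(let D = Dtreat v V G T;
          Y = Yobs v V G T Y0 Y1;
          S = {\<omega> \<in> space M. Dpot v V G 0 \<omega> < Dpot v V G 1 \<omega> \<and> G \<omega> = 1};
          \<Delta> = cexp M (\<lambda>\<omega>. Y1 \<omega> - Y0 \<omega>) (S \<inter> {\<omega> \<in> space M. T \<omega> = 1});
          p = (\<lambda>g t. cexp M D (cell M G T g t));
          \<Delta>c = (\<lambda>g t. cexp M (\<lambda>\<omega>. Y1 \<omega> - Y0 \<omega>)
                    (cell M G T g t \<inter> {\<omega> \<in> space M. Dpot v V G 0 \<omega> = 1}))
      in DID M G T Y / DID M G T D
         = \<Delta> + (1 / DID M G T D) * ((\<Delta>c 1 1 - \<Delta>c 1 0) * p 1 0 - (\<Delta>c 0 1 - \<Delta>c 0 0) * p 0 0))"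
proof -
  interpret threshold_did M V G T v
    by (intro threshold_did.intro threshold_did_axioms.intro M V_meas G_meas T_meas A1)
      (use cells_pos in auto)
  let ?\<Delta>c = "\<lambda>g t. cexp M (\<lambda>\<omega>. Y1 \<omega> - Y0 \<omega>) (cell M G T g t \<inter> above (v g 0))"
  let ?\<Delta> = "cexp M (\<lambda>\<omega>. Y1 \<omega> - Y0 \<omega>) (cell M G T 1 1 \<inter> above (v 1 1) - above (v 1 0))"
  have takeup: "cexp M (Dtreat v V G T) (cell M G T g t) = group_tail g (v g t)"
    if "g \<in> {0,1}" "t \<in> {0,1}" for g t
    using cexp_Dtreat_cell that by simp
  have DID_D: "DID M G T (Dtreat v V G T) = group_tail 1 (v 1 1) - group_tail 1 (v 1 0)"
    using A5b by (simp add: DID_def takeup)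
  have "v 1 1 \<le> v 1 0"
  proof (rule ccontr)
    assume "\<not> v 1 1 \<le> v 1 0"
    then have "group_tail 1 (v 1 1) \<le> group_tail 1 (v 1 0)"
      by (intro group_tail_antimono) simp
    with A2a show False
      by (simp add: takeup)
  qed
  note Y11 = cexp_Yobs_cell_switchers[OF Y0_int Y1_int _ _ this]
  have "group_tail 0 (v 0 1) = group_tail 0 (v 0 0)"
    using A5b by (simp add: takeup)
  note Y01 = cexp_Yobs_cell_stable_tail[OF Y0_int Y1_int _ _ this]
    and Yt0 = cexp_Yobs_cell_stable_tail[OF Y0_int Y1_int _ _ refl]
  have DID_Y: "DID M G T (Yobs v V G T Y0 Y1)
      = ?\<Delta> * (group_tail 1 (v 1 1) - group_tail 1 (v 1 0))
        + group_tail 1 (v 1 0) * (?\<Delta>c 1 1 - ?\<Delta>c 1 0) - group_tail 0 (v 0 0) * (?\<Delta>c 0 1 - ?\<Delta>c 0 0)"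
    unfolding DID_def using Y11 Y01 Yt0[of 1] Yt0[of 0] A3 by (simp add: algebra_simps)
  have "DID M G T (Dtreat v V G T) > 0"
    using A2a by (simp add: DID_D takeup)
  then show ?thesis
    unfolding Let_def switcher_set_eq cell_inter_Dpot_eq DID_Y
    by (simp add: DID_D takeup field_simps)
qed

end
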